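(* Let $(\mathbf x,\mathbf p,\mu)$ be a deterministic TFM satisfying weak UIC and $2$-weak-SCP. Then for every bid vector $\mathbf b$ and users $i,j$ with $x_i(\mathbf b)=1$ and $x_j(\mathbf b)=0$, we have $b_i\ge b_j$. In other words, the confirmed bids are the $k$ highest bids for some $k$ that may depend on $\mathbf b$.
   Context: Setting (TFM). Each user $i$ has a true value $v_i\ge0$ and submits a single bid $b_i\ge0$; $\mathbf b=(b_1,\dots,b_m)$, $\mathbf b_{-i}$ the other bids. A TFM has an inclusion rule (run by the miner, choosing at most $B$ bids) and confirmation, payment, miner-revenue rules (run by the blockchain on included bids); the mechanism treats users symmetrically (swapping two users' positions and bids swaps their outcomes). Composing the honest inclusion rule with the others gives deterministic $(\mathbf x,\mathbf p,\mu)$: $x_i(\mathbf b)\in\{0,1\}$ indicates confirmation, $p_i(\mathbf b)\le b_i$ the payment ($0$ if unconfirmed), $\mu(\mathbf b)$ the miner revenue. Strategic players (a user, the miner, or the miner with some users) may bid untruthfully after seeing all bids, inject fake bids (true value $0$), and (if the miner is involved) include any at most $B$ available bids in any positions. Weak ($1$-strict) utility: miner revenue (if the miner is in the player) plus $v-p$ for each confirmed transaction of the player (true value $v$, payment $p$), minus $(b-v)$ for each unconfirmed transaction of the player with bid $b>v$. Weak UIC: with an honest miner, each user's weak utility is maximized by truthful bidding without fake bids, whatever the other bids. $c$-weak-SCP: for every coalition of the miner with between $1$ and $c$ users, joint weak utility is maximized by truthful bidding and honest miner behavior, whatever the other bids. *)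

theory Defs
  imports Main "HOL.Real"
begin

text \<open>A bid vector is a list of reals; user i (i < length b) has bid b ! i.
  incl: the honest inclusion rule, returning the (ordered) list of indices of included
        bids; the block is the list of included bids in that order.
  conf, pay, rev: confirmation, payment and miner-revenue rules run by the blockchain on a
        block (list of bids); conf blk k / pay blk k refer to position k of the block.\<close>

record tfm =
  incl :: "real list \<Rightarrow> nat list"
  conf :: "real list \<Rightarrow> nat \<Rightarrow> bool"
  pay  :: "real list \<Rightarrow> nat \<Rightarrow> real"
  rev  :: "real list \<Rightarrow> real"

definition nonneg :: "real list \<Rightarrow> bool" where
  "nonneg b \<longleftrightarrow> (\<forall>x\<in>set b. 0 \<le> x)"

definition block_of :: "real list \<Rightarrow> nat list \<Rightarrow> real list" where
  "block_of a idx = map (\<lambda>k. a ! k) idx"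

definition conf_in :: "tfm \<Rightarrow> real list \<Rightarrow> nat list \<Rightarrow> nat \<Rightarrow> bool" where
  "conf_in M a idx i \<longleftrightarrow>
     (\<exists>k < length idx. idx ! k = i \<and> conf M (block_of a idx) k)"

definition pay_in :: "tfm \<Rightarrow> real list \<Rightarrow> nat list \<Rightarrow> nat \<Rightarrow> real" where
  "pay_in M a idx i =
     (if conf_in M a idx i
      then pay M (block_of a idx) (LEAST k. k < length idx \<and> idx ! k = i)
      else 0)"

definition xx :: "tfm \<Rightarrow> real list \<Rightarrow> nat \<Rightarrow> bool" where
  "xx M b i = conf_in M b (incl M b) i"

definition pp :: "tfm \<Rightarrow> real list \<Rightarrow> nat \<Rightarrow> real" where
  "pp M b i = pay_in M b (incl M b) i"

definition mu :: "tfm \<Rightarrow> real list \<Rightarrow> real" where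
  "mu M b = rev M (block_of b (incl M b))"

definition swap_idx :: "nat \<Rightarrow> nat \<Rightarrow> nat \<Rightarrow> nat" where
  "swap_idx i j k = (if k = i then j else if k = j then i else k)"

definition well_formed :: "tfm \<Rightarrow> nat \<Rightarrow> bool" where
  "well_formed M B \<longleftrightarrow>
     (\<forall>b. distinct (incl M b) \<and> set (incl M b) \<subseteq> {..<length b} \<and> length (incl M b) \<le> B)
   \<and> (\<forall>b. nonneg b \<longrightarrow> (\<forall>i < length b. pp M b i \<le> b ! i))
   \<and> (\<forall>b i j. nonneg b \<longrightarrow> i < length b \<longrightarrow> j < length b \<longrightarrow>
        (let b' = b[i := b ! j, j := b ! i] in
           (\<forall>k. xx M b' k = xx M b (swap_idx i j k))
         \<and> (\<forall>k. pp M b' k = pp M b (swap_idx i j k))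
         \<and> mu M b' = mu M b))"

definition weak_util :: "tfm \<Rightarrow> real list \<Rightarrow> nat list \<Rightarrow> nat set \<Rightarrow> (nat \<Rightarrow> real) \<Rightarrow> real" where
  "weak_util M a idx own v =
     (\<Sum>i\<in>own. if conf_in M a idx i then v i - pay_in M a idx i
               else if a ! i > v i then - (a ! i - v i) else 0)"

text \<open>True values: original users bid truthfully in b; injected fake bids (indices
  length b, length b + 1, ...) have true value 0.\<close>
definition true_val :: "real list \<Rightarrow> nat \<Rightarrow> real" where
  "true_val b k = (if k < length b then b ! k else 0)"

text \<open>Weak UIC: with an honest miner, a user i whose true value is b ! i cannot gain by
  changing its bid and/or injecting fake bids (appended after the original bids).\<close>
definition weak_UIC :: "tfm \<Rightarrow> bool" where
  "weak_UIC M \<longleftrightarrow>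
     (\<forall>b i a. nonneg b \<longrightarrow> i < length b \<longrightarrow> nonneg a \<longrightarrow> length b \<le> length a \<longrightarrow>
        (\<forall>j < length b. j \<noteq> i \<longrightarrow> a ! j = b ! j) \<longrightarrow>
        weak_util M a (incl M a) ({i} \<union> {length b..<length a}) (true_val b)
          \<le> weak_util M b (incl M b) {i} (true_val b))"

definition weak_SCP :: "tfm \<Rightarrow> nat \<Rightarrow> nat \<Rightarrow> bool" where
  "weak_SCP M B c \<longleftrightarrow>
     (\<forall>b C a idx. nonneg b \<longrightarrow> C \<subseteq> {..<length b} \<longrightarrow> 1 \<le> card C \<longrightarrow> card C \<le> c \<longrightarrow>
        nonneg a \<longrightarrow> length b \<le> length a \<longrightarrow>
        (\<forall>j < length b. j \<notin> C \<longrightarrow> a ! j = b ! j) \<longrightarrow>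
        distinct idx \<longrightarrow> set idx \<subseteq> {..<length a} \<longrightarrow> length idx \<le> B \<longrightarrow>
        rev M (block_of a idx) + weak_util M a idx (C \<union> {length b..<length a}) (true_val b)
          \<le> mu M b + weak_util M b (incl M b) C (true_val b))"

end

theory Submission
  imports Defs
begin

text \<open>Suppose user i is confirmed, user j is not, and b_i < b_j.  Raise i's bid to b_j: by UIC,
  i stays confirmed and pays no more than before, and by symmetry j, now holding an identical bid,
  is confirmed at the same price p.  The miner colluding with i alone could undo the raise, so the
  raise increases miner revenue by at least p - p_i(b); the miner colluding with i and j could
  perform it, so it increases miner revenue by at most (p - p_i(b)) - (b_j - p).  Hence
  b_j \<le> p \<le> p_i(b) \<le> b_i.\<close>

lemma true_val_nth [simp]: "k < length b \<Longrightarrow> true_val b k = b ! k"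
  by (simp add: true_val_def)

lemma weak_util_honest_singleton:
  "weak_util M a (incl M a) {k} v =
     (if xx M a k then v k - pp M a k else if v k < a ! k then v k - a ! k else 0)"
  by (simp add: weak_util_def xx_def pp_def)

lemma weak_util_insert:
  "finite C \<Longrightarrow> k \<notin> C \<Longrightarrow>
     weak_util M a idx (insert k C) v = weak_util M a idx {k} v + weak_util M a idx C v"
  by (simp add: weak_util_def)

lemma well_formed_incl:
  "well_formed M B \<Longrightarrow>
     distinct (incl M b) \<and> set (incl M b) \<subseteq> {..<length b} \<and> length (incl M b) \<le> B"
  by (simp add: well_formed_def)

lemma well_formed_pay_le_bid:
  "well_formed M B \<Longrightarrow> nonneg b \<Longrightarrow> i < length b \<Longrightarrow> pp M b i \<le> b ! i"
  by (simp add: well_formed_def)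

lemma well_formed_equal_bids:
  assumes "well_formed M B" "nonneg b" "i < length b" "j < length b" "b ! i = b ! j"
  shows "xx M b j = xx M b i \<and> pp M b j = pp M b i"
proof -
  have "b[i := b ! j, j := b ! i] = b"
    using assms(5) by (metis list_update_id)
  with assms(1-4) have "xx M b j = xx M b (swap_idx i j j) \<and> pp M b j = pp M b (swap_idx i j j)"
    unfolding well_formed_def Let_def by metis
  then show ?thesis
    by (simp add: swap_idx_def)
qed

lemma weak_UIC_bid_change:
  assumes "weak_UIC M" "nonneg b" "nonneg a" "length a = length b" "i < length b"
    and "\<forall>k < length b. k \<noteq> i \<longrightarrow> a ! k = b ! k"
  shows "weak_util M a (incl M a) {i} (true_val b) \<le> weak_util M b (incl M b) {i} (true_val b)"
  using assms unfolding weak_UIC_def by (metis atLeastLessThan_empty order.refl sup_bot_right)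

lemma weak_SCP_bid_change:
  assumes "well_formed M B" "weak_SCP M B c" "nonneg b" "nonneg a" "length a = length b"
    and "C \<subseteq> {..<length b}" "1 \<le> card C" "card C \<le> c"
    and "\<forall>k < length b. k \<notin> C \<longrightarrow> a ! k = b ! k"
  shows "mu M a + weak_util M a (incl M a) C (true_val b)
           \<le> mu M b + weak_util M b (incl M b) C (true_val b)"
  using assms(2-) well_formed_incl[OF assms(1), of a]
  unfolding weak_SCP_def mu_def by (metis atLeastLessThan_empty order.refl sup_bot_right)

text \<open>Raising a confirmed bid above its old value keeps it confirmed and does not raise its payment:
  otherwise the raiser, whose true value is the new bid, would profit from bidding the old one.\<close>
lemma weak_UIC_raise_bid:
  assumes wf: "well_formed M B" and uic: "weak_UIC M"
    and b: "nonneg b" "i < length b" "xx M b i" and raise: "b ! i < w"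
  shows "xx M (b[i := w]) i \<and> pp M (b[i := w]) i \<le> pp M b i"
proof -
  let ?v = "b[i := w]"
  have "0 \<le> b ! i"
    using b(1,2) unfolding nonneg_def by simp
  then have "nonneg ?v"
    using b(1) raise set_update_subset_insert[of b i w] unfolding nonneg_def by fastforce
  then have "weak_util M b (incl M b) {i} (true_val ?v) \<le> weak_util M ?v (incl M ?v) {i} (true_val ?v)"
    using weak_UIC_bid_change[OF uic, of ?v b i] b by simp
  moreover have "pp M b i \<le> b ! i"
    using well_formed_pay_le_bid[OF wf b(1,2)] .
  ultimately show ?thesis
    using b raise by (auto simp: weak_util_honest_singleton split: if_splits)
qed

theorem mainTheorem15:
  fixes M :: tfm and B :: nat
  assumes "well_formed M B"
    and "weak_UIC M"
    and "weak_SCP M B 2"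
  shows "\<forall>b i j. nonneg b \<longrightarrow> i < length b \<longrightarrow> j < length b \<longrightarrow>
           xx M b i \<longrightarrow> \<not> xx M b j \<longrightarrow> b ! j \<le> b ! i"
proof (intro allI impI leI notI)
  fix b i j
  assume b: "nonneg b" "i < length b" "j < length b" "xx M b i" "\<not> xx M b j"
    and lt: "b ! i < b ! j"
  define v where "v = b[i := b ! j]"
  have ij: "i \<noteq> j"
    using b by auto
  have v: "nonneg v" "length v = length b" "v ! i = b ! j" "v ! j = b ! j"
    using b ij set_update_subset_insert[of b i "b ! j"] unfolding v_def nonneg_def by auto
  have vi: "xx M v i" "pp M v i \<le> pp M b i"
    using weak_UIC_raise_bid[OF assms(1,2) b(1,2,4) lt] unfolding v_def by auto
  have vj: "xx M v j" "pp M v j = pp M v i"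
    using well_formed_equal_bids[OF assms(1) v(1), of i j] v vi b by auto
  have "mu M b + weak_util M b (incl M b) {i} (true_val v)
          \<le> mu M v + weak_util M v (incl M v) {i} (true_val v)"
    by (rule weak_SCP_bid_change[OF assms(1,3) v(1) b(1) v(2)[symmetric]]) (auto simp: v_def b)
  then have undo: "mu M b + (b ! j - pp M b i) \<le> mu M v + (b ! j - pp M v i)"
    using b v vi by (simp add: weak_util_honest_singleton)
  have "mu M v + weak_util M v (incl M v) {i, j} (true_val b)
          \<le> mu M b + weak_util M b (incl M b) {i, j} (true_val b)"
    by (rule weak_SCP_bid_change[OF assms(1,3) b(1) v(1,2)]) (auto simp: v_def b ij)
  then have raise: "mu M v + (b ! i - pp M v i) + (b ! j - pp M v i) \<le> mu M b + (b ! i - pp M b i)"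
    using b v vi vj ij by (simp add: weak_util_insert weak_util_honest_singleton)
  show False
    using undo raise vi well_formed_pay_le_bid[OF assms(1) b(1,2)] lt by linarith
qed

end
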